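(* Let $u_1,u_2\in\mathcal U$ belong to the same group $C_k$ and satisfy $R(u_1)\ge R(u_2)$. If $F$ is a maxmin-fair distribution over the set $\mathcal S$ of valid rankings (for the satisfaction function $A=V$), then $$\mathbb E_{r\sim F}[f(r(u_1))]\ \ge\ \mathbb E_{r\sim F}[f(r(u_2))].$$
   Context: Ranking setting: $\mathcal U=\{u_1,\dots,u_n\}$ is a finite set of $n$ individuals, partitioned into groups $C_1,\dots,C_t$. $R:\mathcal U\to\mathbb R$ is a relevance function with pairwise distinct values. A ranking is a bijection $r:\mathcal U\to[n]$; $r(u)$ is the position of $u$. For each $i\in[n]$ and $k\in[t]$ there are integers $l_i^k\le u_i^k$, and the set of valid rankings is $\mathcal S=\{r : l_i^k\le |\{u\in C_k: r(u)\le i\}|\le u_i^k\ \forall i\in[n],k\in[t]\}$, assumed nonempty. The value function is $V(r,u)=f(r(u))-g(u)$, where $f:[n]\to\mathbb R$ is non-increasing ($f(1)\ge f(2)\ge\dots\ge f(n)$) and $g:\mathcal U\to\mathbb R$ is increasing in relevance, i.e. $R(u)\ge R(v)\Rightarrow g(u)\ge g(v)$. Maxmin-fairness: for a finite nonempty set $\mathcal S$ of solutions, a finite set $\mathcal U$ of individuals and a satisfaction function $A:\mathcal S\times\mathcal U\to\mathbb R$, for a probability distribution $D$ over $\mathcal S$ write $D[u]=\mathbb E_{S\sim D}[A(S,u)]$. A distribution $F$ over $\mathcal S$ is maxmin-fair for $(\mathcal U,A)$ if for every distribution $D$ over $\mathcal S$ and every $u\in\mathcal U$: if $D[u]>F[u]$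 then there exists $v\in\mathcal U$ with $D[v]<F[v]\le F[u]$. (Equivalently, the vector of values $(F[u])_{u\in\mathcal U}$ sorted increasingly is lexicographically $\ge$ the corresponding sorted vector of every distribution $D$.) Here $A=V$. *)

theory Defs
  imports "HOL-Probability.Probability"
begin

text \<open>Rankings of the finite set U of individuals: bijections U \<rightarrow> {1..card U}
  (extensional, i.e. fixed to undefined outside U, so that distinct rankings are
  distinct functions).\<close>
definition rankings :: "'a set \<Rightarrow> ('a \<Rightarrow> nat) set" where
  "rankings U = {r. r \<in> extensional U \<and> bij_betw r U {1..card U}}"

definition valid_rankings ::
  "'a set \<Rightarrow> nat \<Rightarrow> (nat \<Rightarrow> 'a set) \<Rightarrow> (nat \<Rightarrow> nat \<Rightarrow> int) \<Rightarrow> (nat \<Rightarrow> nat \<Rightarrow> int)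
     \<Rightarrow> ('a \<Rightarrow> nat) set" where
  "valid_rankings U t C l up =
     {r \<in> rankings U. \<forall>i\<in>{1..card U}. \<forall>k\<in>{1..t}.
        l i k \<le> int (card {u \<in> C k. r u \<le> i}) \<and> int (card {u \<in> C k. r u \<le> i}) \<le> up i k}"

definition exp_sat :: "'s pmf \<Rightarrow> ('s \<Rightarrow> 'a \<Rightarrow> real) \<Rightarrow> 'a \<Rightarrow> real" where
  "exp_sat D A u = measure_pmf.expectation D (\<lambda>s. A s u)"

definition maxmin_fair :: "'s set \<Rightarrow> 'a set \<Rightarrow> ('s \<Rightarrow> 'a \<Rightarrow> real) \<Rightarrow> 's pmf \<Rightarrow> bool" where
  "maxmin_fair S U A F \<longleftrightarrow> set_pmf F \<subseteq> S \<and>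
     (\<forall>D. set_pmf D \<subseteq> S \<longrightarrow>
        (\<forall>u\<in>U. exp_sat D A u > exp_sat F A u \<longrightarrow>
           (\<exists>v\<in>U. exp_sat D A v < exp_sat F A v \<and> exp_sat F A v \<le> exp_sat F A u)))"

end

theory Submission
  imports Defs "HOL-Combinatorics.Permutations"
begin

text \<open>Swapping the positions of two members of the same group maps valid rankings to valid
  rankings. Applying this swap of u1 and u2 to every ranking drawn from F exchanges their
  expected f-values and leaves everyone else unchanged. If u2 had the larger expected f-value,
  u1 would strictly gain, so maxmin-fairness forces F[u2] \<le> F[u1]; together with
  g u2 \<le> g u1 this contradicts the assumption.\<close>

lemma rankings_comp_permutes:
  assumes "\<pi> permutes U" and "r \<in> rankings U"
  shows "r \<circ> \<pi> \<in> rankings U"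
proof -
  have "r \<circ> \<pi> \<in> extensional U"
    using assms by (auto simp: rankings_def extensional_def permutes_not_in)
  moreover have "bij_betw (r \<circ> \<pi>) U {1..card U}"
    using assms by (auto simp: rankings_def intro: bij_betw_trans permutes_imp_bij)
  ultimately show ?thesis by (simp add: rankings_def)
qed

lemma valid_rankings_comp_permutes:
  assumes perm: "\<pi> permutes U"
    and groups: "\<And>j x. j \<in> {1..t} \<Longrightarrow> \<pi> x \<in> C j \<longleftrightarrow> x \<in> C j"
    and r: "r \<in> valid_rankings U t C l up"
  shows "r \<circ> \<pi> \<in> valid_rankings U t C l up"
proof -
  have count: "card {u \<in> C j. (r \<circ> \<pi>) u \<le> i} = card {u \<in> C j. r u \<le> i}"
    if "j \<in> {1..t}" for i j
  proof -
    have "{u \<in> C j. (r \<circ> \<pi>) u \<le> i} = \<pi> -` {u \<in> C j. r u \<le> i}"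
      using groups[OF that] by auto
    moreover have "card (\<pi> -` {u \<in> C j. r u \<le> i}) = card {u \<in> C j. r u \<le> i}"
      by (rule card_vimage_inj) (simp_all add: permutes_inj[OF perm] permutes_surj[OF perm])
    ultimately show ?thesis by simp
  qed
  show ?thesis
    using r rankings_comp_permutes[OF perm] count by (auto simp: valid_rankings_def)
qed

lemma finite_valid_rankings:
  assumes "finite U"
  shows "finite (valid_rankings U t C l up)"
proof (rule finite_subset)
  show "valid_rankings U t C l up \<subseteq> PiE U (\<lambda>_. {1..card U})"
    by (auto simp: valid_rankings_def rankings_def PiE_def bij_betw_def)
  show "finite (PiE U (\<lambda>_. {1..card U}))"
    using assms by (simp add: finite_PiE)
qed

lemma exp_sat_rank_value:
  fixes F :: "('a \<Rightarrow> nat) pmf"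
  assumes "finite (set_pmf F)"
  shows "exp_sat F (\<lambda>r u. f (r u) - g u) u = measure_pmf.expectation F (\<lambda>r. f (r u)) - g u"
  using assms by (simp add: exp_sat_def integrable_measure_pmf_finite)

lemma maxmin_fair_exchange:
  assumes fair: "maxmin_fair S U A F"
    and D: "set_pmf D \<subseteq> S" and a: "a \<in> U"
    and same: "\<And>v. v \<in> U \<Longrightarrow> v \<noteq> a \<Longrightarrow> v \<noteq> b \<Longrightarrow> exp_sat D A v = exp_sat F A v"
    and gain: "exp_sat D A a > exp_sat F A a"
  shows "exp_sat F A b \<le> exp_sat F A a"
proof -
  obtain v where v: "v \<in> U" "exp_sat D A v < exp_sat F A v" "exp_sat F A v \<le> exp_sat F A a"
    using fair D a gain unfolding maxmin_fair_def by blast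
  have "v = b"
    using same[OF v(1)] v(2) gain by fastforce
  with v(3) show ?thesis by simp
qed

theorem theorem1:
  fixes U :: "'a set" and t :: nat and C :: "nat \<Rightarrow> 'a set"
    and R :: "'a \<Rightarrow> real" and l up :: "nat \<Rightarrow> nat \<Rightarrow> int"
    and f :: "nat \<Rightarrow> real" and g :: "'a \<Rightarrow> real"
    and F :: "('a \<Rightarrow> nat) pmf" and k :: nat and u1 u2 :: 'a
  assumes finU: "finite U"
    and partition: "(\<Union>k\<in>{1..t}. C k) = U"
    and disj: "\<And>k k'. k \<in> {1..t} \<Longrightarrow> k' \<in> {1..t} \<Longrightarrow> k \<noteq> k' \<Longrightarrow> C k \<inter> C k' = {}"
    and R_inj: "inj_on R U"
    and l_le_up: "\<And>i k. i \<in> {1..card U} \<Longrightarrow> k \<in> {1..t} \<Longrightarrow> l i k \<le> up i k"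
    and S_ne: "valid_rankings U t C l up \<noteq> {}"
    and f_mono: "\<And>i j. 1 \<le> i \<Longrightarrow> i \<le> j \<Longrightarrow> j \<le> card U \<Longrightarrow> f j \<le> f i"
    and g_mono: "\<And>u v. u \<in> U \<Longrightarrow> v \<in> U \<Longrightarrow> R v \<le> R u \<Longrightarrow> g v \<le> g u"
    and k: "k \<in> {1..t}" and u1: "u1 \<in> C k" and u2: "u2 \<in> C k"
    and R12: "R u2 \<le> R u1"
    and fair: "maxmin_fair (valid_rankings U t C l up) U (\<lambda>r u. f (r u) - g u) F"
  shows "measure_pmf.expectation F (\<lambda>r. f (r u1)) \<ge> measure_pmf.expectation F (\<lambda>r. f (r u2))"
proof (rule ccontr)
  let ?E = "\<lambda>u. measure_pmf.expectation F (\<lambda>r. f (r u))"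
  let ?A = "\<lambda>r u. f (r u) - g u"
  let ?\<tau> = "Transposition.transpose u1 u2"
  define D where "D = map_pmf (\<lambda>r. r \<circ> ?\<tau>) F"
  assume "\<not> ?E u1 \<ge> ?E u2"
  then have less: "?E u1 < ?E u2" by simp
  have U12: "u1 \<in> U" "u2 \<in> U" using partition k u1 u2 by auto
  have FS: "set_pmf F \<subseteq> valid_rankings U t C l up"
    using fair by (simp add: maxmin_fair_def)
  have finF: "finite (set_pmf F)"
    using finite_subset[OF FS finite_valid_rankings[OF finU]] .
  have groups: "?\<tau> x \<in> C j \<longleftrightarrow> x \<in> C j" if "j \<in> {1..t}" for j x
    using disj[OF that k] u1 u2 by (cases "j = k"; cases "x = u1"; cases "x = u2") auto
  have DS: "set_pmf D \<subseteq> valid_rankings U t C l up"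
    using FS valid_rankings_comp_permutes[OF permutes_swap_id[OF U12] groups]
    by (auto simp: D_def)
  have eD: "exp_sat D ?A u = ?E (?\<tau> u) - g u" for u
    by (simp add: D_def exp_sat_def integrable_measure_pmf_finite[OF finF])
  note eF = exp_sat_rank_value[OF finF, of f g]
  have "exp_sat F ?A u2 \<le> exp_sat F ?A u1"
    by (rule maxmin_fair_exchange[OF fair DS U12(1)]) (use less eD eF in auto)
  with less g_mono[OF U12 R12] eF show False by simp
qed

end
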